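(* Let $n\ge 5$ be odd and let $G$ be a connected oriented graph. The following are equivalent: (i) $G\to AC_n$; (ii) for every even integer $l$ with $4\le l\le n+1$, there is no semi-walk in $G$ following the same pattern as $Q_l$; (iii) $Q_{n+1}\not\to G$. Moreover, if $G$ has a vertex with both an in-neighbour and an out-neighbour, these are also equivalent to: (iv) with $(A_0,A_1,\dots,A_m,D_m,\dots,D_1)$ the $n$-cyclic cover of $G$ ($m=\frac{n-1}{2}$), the map $\varphi:V_G\to V_{AC_n}$ given by $\varphi(x)=a_i$ for $x\in A_i$ ($0\le i\le m$) and $\varphi(x)=a_{n-i}$ for $x\in D_i$ ($1\le i\le m$) is a homomorphism $G\to AC_n$.
   Context: An oriented graph is a digraph with no loops and no pair of opposite arcs. A homomorphism $G\to H$ is a vertex map sending arcs to arcs. A semi-walk in $D$ is a sequence $v_1a_1v_2\dots a_{k-1}v_k$ of (not necessarily distinct) vertices and arcs with $a_i$ having endpoints $v_i,v_{i+1}$; $a_i$ is forward if $a_i=(v_i,v_{i+1})$ and backward otherwise; its pattern is the word $l_1\dots l_{k-1}$ over $\{\to,\leftarrow\}$ with $l_i=\to$ iff $a_i$ is forward. The pattern of an oriented path $(p_0,\dots,p_k)$ is defined likewise. For $n\ge 3$, $Q_n$ is the oriented path $(q_0,\dots,q_{n-1})$ on $n$ vertices such that: the first two arcs $q_0q_1,q_1q_2$ are forward; the subpath $(q_1,\dots,q_{n-2})$ is alternating (consecutive arcs have opposite directions); and the last two arcs have the same direction. For $n\ge 3$, $AC_n$ is the oriented cycle with vertices $a_0,\dots,a_{n-1}$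 obtained from the path $(a_0,\dots,a_n)$ in which the arc between $a_i$ and $a_{i+1}$ is $a_i\to a_{i+1}$ if $i$ is even and $a_{i+1}\to a_i$ if $i$ is odd, by identifying $a_n$ with $a_0$. The $n$-cyclic cover (for odd $n\ge5$, $m=\frac{n-1}{2}$, and connected $G$ with a vertex having both in- and out-neighbours): $A_0=\{v: d^-(v)>0, d^+(v)>0\}$; $A_1$ = vertices of $V_G\setminus A_0$ with an in-neighbour in $A_0$; $D_1$ = vertices of $V_G\setminus A_0$ with an out-neighbour in $A_0$; $C_1=A_0\cup A_1\cup D_1$; for $i=2,\dots,m-1$, $D_i$ = vertices of $V_G\setminus C_{i-1}$ with a neighbour in $D_{i-1}$, $A_i$ = vertices of $V_G\setminus C_{i-1}$ with a neighbour in $A_{i-1}$, $C_i=C_{i-1}\cup A_i\cup D_i$; finally, if every vertex of $A_{m-1}$ has out-degree $0$ and every vertex of $D_{m-1}$ has in-degree $0$, $D_m$ = vertices of $V_G\setminus C_{m-1}$ with no out-neighbours and $A_m$ = vertices of $V_G\setminus C_{m-1}$ with no in-neighbours; otherwise $D_m$ = vertices of $V_G\setminus C_{m-1}$ with no in-neighbours and $A_m$ = vertices of $V_G\setminus C_{m-1}$ with no out-neighbours. The cover is $(A_0,A_1,\dots,A_m,D_m,\dots,D_1)$. *)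

theory Defs
  imports Main
begin

(* A digraph is given by a vertex set V and an arc set E \<subseteq> V \<times> V.
   Arcs are pairs (x,y) meaning x \<rightarrow> y. *)

definition oriented_graph :: "'a set \<Rightarrow> ('a \<times> 'a) set \<Rightarrow> bool" where
  "oriented_graph V E \<longleftrightarrow> E \<subseteq> V \<times> V \<and> (\<forall>x. (x, x) \<notin> E)
      \<and> (\<forall>x y. (x, y) \<in> E \<longrightarrow> (y, x) \<notin> E)"

definition connected_digraph :: "'a set \<Rightarrow> ('a \<times> 'a) set \<Rightarrow> bool" where
  "connected_digraph V E \<longleftrightarrow> V \<noteq> {} \<and> (\<forall>x\<in>V. \<forall>y\<in>V. (x, y) \<in> (E \<union> E\<inverse>)\<^sup>*)"

definition hom :: "'a set \<Rightarrow> ('a \<times> 'a) set \<Rightarrow> 'b set \<Rightarrow> ('b \<times> 'b) set \<Rightarrow> ('a \<Rightarrow> 'b) \<Rightarrow> bool" where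
  "hom V E W F f \<longleftrightarrow> (\<forall>x\<in>V. f x \<in> W) \<and> (\<forall>(x, y)\<in>E. (f x, f y) \<in> F)"

definition homomorphic :: "'a set \<Rightarrow> ('a \<times> 'a) set \<Rightarrow> 'b set \<Rightarrow> ('b \<times> 'b) set \<Rightarrow> bool" where
  "homomorphic V E W F \<longleftrightarrow> (\<exists>f. hom V E W F f)"

(* Patterns: words over {\<rightarrow>,\<leftarrow>}, encoded as bool lists, True = forward arc \<rightarrow>. *)

definition semiwalk_with_pattern :: "'a set \<Rightarrow> ('a \<times> 'a) set \<Rightarrow> (nat \<Rightarrow> 'a) \<Rightarrow> bool list \<Rightarrow> bool" where
  "semiwalk_with_pattern V E v p \<longleftrightarrow> (\<forall>i\<le>length p. v i \<in> V) \<and>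
     (\<forall>i<length p. if p ! i then (v i, v (Suc i)) \<in> E else (v (Suc i), v i) \<in> E)"

(* Direction of the i-th arc (between q_i and q_(i+1)) of Q_n, n \<ge> 3:
   arcs 0 and 1 forward; arcs 1..n-3 (those of the subpath q_1..q_(n-2)) alternate;
   the last arc n-2 has the same direction as arc n-3. *)
definition Q_dir :: "nat \<Rightarrow> nat \<Rightarrow> bool" where
  "Q_dir n i = (if i \<le> 1 then True else if i \<le> n - 3 then odd i else odd (n - 3))"

definition Q_pattern :: "nat \<Rightarrow> bool list" where
  "Q_pattern n = map (Q_dir n) [0..<n - 1]"

definition Q_verts :: "nat \<Rightarrow> nat set" where
  "Q_verts n = {0..<n}"

definition Q_arcs :: "nat \<Rightarrow> (nat \<times> nat) set" where
  "Q_arcs n = {(i, Suc i) | i. Suc i < n \<and> Q_dir n i} \<union> {(Suc i, i) | i. Suc i < n \<and> \<not> Q_dir n i}"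

definition AC_verts :: "nat \<Rightarrow> nat set" where
  "AC_verts n = {0..<n}"

definition AC_arcs :: "nat \<Rightarrow> (nat \<times> nat) set" where
  "AC_arcs n = {(i, Suc i mod n) | i. i < n \<and> even i} \<union> {(Suc i mod n, i) | i. i < n \<and> odd i}"

definition cc_A0 :: "'a set \<Rightarrow> ('a \<times> 'a) set \<Rightarrow> 'a set" where
  "cc_A0 V E = {x\<in>V. (\<exists>u. (u, x) \<in> E) \<and> (\<exists>w. (x, w) \<in> E)}"

(* cc_layers V E i = (A_i, D_i, C_i) for 1 \<le> i (D_0 := {}, C_0 := A_0) *)
fun cc_layers :: "'a set \<Rightarrow> ('a \<times> 'a) set \<Rightarrow> nat \<Rightarrow> 'a set \<times> 'a set \<times> 'a set" where
  "cc_layers V E 0 = (cc_A0 V E, {}, cc_A0 V E)"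
| "cc_layers V E (Suc 0) =
     (let A0 = cc_A0 V E;
          A1 = {x \<in> V - A0. \<exists>y\<in>A0. (y, x) \<in> E};
          D1 = {x \<in> V - A0. \<exists>y\<in>A0. (x, y) \<in> E}
      in (A1, D1, A0 \<union> A1 \<union> D1))"
| "cc_layers V E (Suc (Suc i)) =
     (case cc_layers V E (Suc i) of (Ai, Di, Ci) \<Rightarrow>
        (let Di' = {x \<in> V - Ci. \<exists>y\<in>Di. (x, y) \<in> E \<or> (y, x) \<in> E};
             Ai' = {x \<in> V - Ci. \<exists>y\<in>Ai. (x, y) \<in> E \<or> (y, x) \<in> E}
         in (Ai', Di', Ci \<union> Ai' \<union> Di')))"

(* the last layer (A_m, D_m), m = (n-1)/2 *)
definition cc_last :: "'a set \<Rightarrow> ('a \<times> 'a) set \<Rightarrow> nat \<Rightarrow> 'a set \<times> 'a set" where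
  "cc_last V E n =
     (case cc_layers V E ((n - 1) div 2 - 1) of (Am1, Dm1, Cm1) \<Rightarrow>
        if (\<forall>x\<in>Am1. \<not> (\<exists>y. (x, y) \<in> E)) \<and> (\<forall>x\<in>Dm1. \<not> (\<exists>y. (y, x) \<in> E))
        then ({x \<in> V - Cm1. \<not> (\<exists>y. (y, x) \<in> E)}, {x \<in> V - Cm1. \<not> (\<exists>y. (x, y) \<in> E)})
        else ({x \<in> V - Cm1. \<not> (\<exists>y. (x, y) \<in> E)}, {x \<in> V - Cm1. \<not> (\<exists>y. (y, x) \<in> E)}))"

definition cc_A :: "'a set \<Rightarrow> ('a \<times> 'a) set \<Rightarrow> nat \<Rightarrow> nat \<Rightarrow> 'a set" where
  "cc_A V E n i = (if i < (n - 1) div 2 then fst (cc_layers V E i)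
                   else if i = (n - 1) div 2 then fst (cc_last V E n) else {})"

definition cc_D :: "'a set \<Rightarrow> ('a \<times> 'a) set \<Rightarrow> nat \<Rightarrow> nat \<Rightarrow> 'a set" where
  "cc_D V E n i = (if 1 \<le> i \<and> i < (n - 1) div 2 then fst (snd (cc_layers V E i))
                   else if i = (n - 1) div 2 then snd (cc_last V E n) else {})"

definition cc_class :: "'a set \<Rightarrow> ('a \<times> 'a) set \<Rightarrow> nat \<Rightarrow> nat \<Rightarrow> 'a set" where
  "cc_class V E n k = (if k \<le> (n - 1) div 2 then cc_A V E n k
                       else if k < n then cc_D V E n (n - k) else {})"

definition cc_map :: "'a set \<Rightarrow> ('a \<times> 'a) set \<Rightarrow> nat \<Rightarrow> 'a \<Rightarrow> nat" where
  "cc_map V E n x = (THE k. k < n \<and> x \<in> cc_class V E n k)"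

end

theory Submission
  imports Defs
begin

text \<open>
  (i) \<Rightarrow> (ii): in \<open>AC\<^sub>n\<close> the only vertex with both an in- and an out-neighbour is \<open>a\<^sub>0\<close>, so the
  two leading forward arcs of a \<open>Q\<^sub>l\<close>-semi-walk pass through \<open>a\<^sub>n\<^sub>-\<^sub>1 a\<^sub>0 a\<^sub>1\<close>, and so must the
  two trailing ones; in between, the alternating part climbs at most two indices per two arcs and
  cannot get back to \<open>a\<^sub>n\<^sub>-\<^sub>1\<close> when \<open>l \<le> n + 1\<close>.
  (ii) \<Leftrightarrow> (iii): going back and forth once more along the second arc turns a \<open>Q\<^sub>l\<close>-semi-walk into a
  \<open>Q\<^sub>l\<^sub>+\<^sub>2\<close>-semi-walk, and a homomorphism \<open>Q\<^sub>n\<^sub>+\<^sub>1 \<rightarrow> G\<close> is the same as a \<open>Q\<^sub>n\<^sub>+\<^sub>1\<close>-semi-walk.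
  (ii) \<Rightarrow> (iv) \<Rightarrow> (i): the layers of the cyclic cover are the breadth-first layers around \<open>A\<^sub>0\<close>.
  Outside \<open>A\<^sub>0\<close> every vertex is a source or a sink, according to the parity of its layer, and is
  the end of a zigzag semi-walk starting in \<open>A\<^sub>0\<close>. An arc inside \<open>A\<^sub>0\<close>, or between \<open>A\<^sub>s\<close> and
  \<open>D\<^sub>t\<close> with \<open>s, t < m\<close>, would join two such zigzags into a \<open>Q\<^sub>s\<^sub>+\<^sub>t\<^sub>+\<^sub>4\<close>-semi-walk; hence under (ii)
  every arc joins two classes whose indices are adjacent on the cycle, in the direction dictated
  by parity. If \<open>A\<^sub>0\<close> is empty, \<open>G\<close> maps onto a single arc of \<open>AC\<^sub>n\<close>.
\<close>

(* The pattern is a predicate on arc indices and L counts the arcs, so v 0, ..., v L are the vertices. *)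
definition semiwalk :: "'a set \<Rightarrow> ('a \<times> 'a) set \<Rightarrow> (nat \<Rightarrow> 'a) \<Rightarrow> nat \<Rightarrow> (nat \<Rightarrow> bool) \<Rightarrow> bool" where
  "semiwalk V E v L P \<longleftrightarrow> (\<forall>i\<le>L. v i \<in> V) \<and>
     (\<forall>i<L. if P i then (v i, v (Suc i)) \<in> E else (v (Suc i), v i) \<in> E)"

lemma semiwalk_cong:
  "(\<And>i. i < L \<Longrightarrow> P i = P' i) \<Longrightarrow> semiwalk V E v L P = semiwalk V E v L P'"
  by (simp add: semiwalk_def)

lemma semiwalk_with_Q_pattern_iff:
  "semiwalk_with_pattern V E v (Q_pattern l) \<longleftrightarrow> semiwalk V E v (l - 1) (Q_dir l)"
  by (simp add: semiwalk_with_pattern_def semiwalk_def Q_pattern_def)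

lemma semiwalk_converse: "semiwalk V (E\<inverse>) v L P \<longleftrightarrow> semiwalk V E v L (\<lambda>i. \<not> P i)"
  by (auto simp: semiwalk_def)

lemma semiwalk_snoc:
  assumes "semiwalk V E v L P" "x \<in> V" "if P L then (v L, x) \<in> E else (x, v L) \<in> E"
  shows "semiwalk V E (v(Suc L := x)) (Suc L) P"
  using assms by (auto simp: semiwalk_def less_Suc_eq le_Suc_eq)

lemma semiwalk_reverse:
  assumes "semiwalk V E v L P"
  shows "semiwalk V E (\<lambda>i. v (L - i)) L (\<lambda>i. \<not> P (L - Suc i))"
  unfolding semiwalk_def
proof (intro conjI allI impI)
  fix i assume "i < L"
  then have "L - Suc i < L" "Suc (L - Suc i) = L - i" by simp_all
  then show "if \<not> P (L - Suc i) then (v (L - i), v (L - Suc i)) \<in> E else (v (L - Suc i), v (L - i)) \<in> E"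
    using assms unfolding semiwalk_def by (metis (full_types))
qed (use assms in \<open>simp add: semiwalk_def\<close>)

lemma semiwalk_append:
  assumes u: "semiwalk V E u a P" and v: "semiwalk V E v b P'" and "v 0 = u a"
  shows "semiwalk V E (\<lambda>i. if i \<le> a then u i else v (i - a)) (a + b)
           (\<lambda>i. if i < a then P i else P' (i - a))"
  unfolding semiwalk_def
proof (intro conjI allI impI)
  fix i assume "i \<le> a + b"
  then show "(if i \<le> a then u i else v (i - a)) \<in> V"
    using u v unfolding semiwalk_def by auto
next
  fix i assume i: "i < a + b"
  show "if (if i < a then P i else P' (i - a))
        then ((if i \<le> a then u i else v (i - a)), (if Suc i \<le> a then u (Suc i) else v (Suc i - a))) \<in> E
        else ((if Suc i \<le> a then u (Suc i) else v (Suc i - a)), (if i \<le> a then u i else v (i - a))) \<in> E"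
  proof (cases "i < a")
    case True
    then show ?thesis using u unfolding semiwalk_def by auto
  next
    case False
    then have "(if i \<le> a then u i else v (i - a)) = v (i - a)" "Suc i - a = Suc (i - a)" "i - a < b"
      using \<open>v 0 = u a\<close> i by auto
    then show ?thesis using False v unfolding semiwalk_def by auto
  qed
qed

lemma semiwalk_hom: "hom V E W F f \<Longrightarrow> semiwalk V E v L P \<Longrightarrow> semiwalk W F (f \<circ> v) L P"
  by (fastforce simp: hom_def semiwalk_def)

lemma hom_Q_iff_semiwalk:
  assumes "0 < L"
  shows "hom (Q_verts L) (Q_arcs L) V E g \<longleftrightarrow> semiwalk V E g (L - 1) (Q_dir L)"
proof
  assume "hom (Q_verts L) (Q_arcs L) V E g"
  then show "semiwalk V E g (L - 1) (Q_dir L)"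
    using \<open>0 < L\<close> unfolding hom_def semiwalk_def Q_verts_def Q_arcs_def by auto
next
  assume "semiwalk V E g (L - 1) (Q_dir L)"
  then show "hom (Q_verts L) (Q_arcs L) V E g"
    using \<open>0 < L\<close> unfolding hom_def semiwalk_def Q_verts_def Q_arcs_def by auto
qed

lemma Q_dir_even: "even l \<Longrightarrow> 4 \<le> l \<Longrightarrow> Q_dir l i \<longleftrightarrow> i \<le> 1 \<or> odd i \<or> l - 3 < i"
  by (auto simp: Q_dir_def)

(* The new walk is v 0, v 1, v 2, v 1, v 2, v 3, ...: once more back and forth along the arc v 1 v 2. *)
lemma semiwalk_Q_extend:
  assumes l: "even l" "4 \<le> l" and walk: "semiwalk V E v (l - 1) (Q_dir l)"
  shows "semiwalk V E (\<lambda>i. if i \<le> 2 then v i else v (i - 2)) (l + 1) (Q_dir (l + 2))"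
  unfolding semiwalk_def
proof (intro conjI allI impI)
  fix i assume "i \<le> l + 1"
  then show "(if i \<le> 2 then v i else v (i - 2)) \<in> V" using walk l unfolding semiwalk_def by auto
next
  have arc: "if Q_dir l i then (v i, v (Suc i)) \<in> E else (v (Suc i), v i) \<in> E" if "i < l - 1" for i
    using walk that unfolding semiwalk_def by blast
  have dir: "Q_dir (l + 2) i \<longleftrightarrow> i \<le> 1 \<or> odd i \<or> l - 1 < i" for i
    using Q_dir_even[of "l + 2" i] l by auto
  have v12: "(v 1, v 2) \<in> E" using arc[of 1] l by (simp add: Q_dir_even numeral_2_eq_2)
  fix i assume i: "i < l + 1"
  consider "i \<le> 1" | "i = 2" | "i = 3" | "4 \<le> i" by linarith
  then show "if Q_dir (l + 2) i
      then ((if i \<le> 2 then v i else v (i - 2)), (if Suc i \<le> 2 then v (Suc i) else v (Suc i - 2))) \<in> E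
      else ((if Suc i \<le> 2 then v (Suc i) else v (Suc i - 2)), (if i \<le> 2 then v i else v (i - 2))) \<in> E"
  proof cases
    case 1
    then have "Q_dir (l + 2) i" "Q_dir l i" "i < l - 1" using l by (auto simp: Q_dir_def)
    then show ?thesis using arc[of i] 1 by simp
  next
    case 2
    then have "\<not> Q_dir (l + 2) i" using l by (simp add: Q_dir_def)
    then show ?thesis using v12 2 by (simp add: numeral_3_eq_3)
  next
    case 3
    have "Q_dir (l + 2) 3" using dir[of 3] by simp
    with 3 v12 show ?thesis by (simp add: numeral_2_eq_2 numeral_3_eq_3)
  next
    case 4
    then have "Q_dir (l + 2) i = Q_dir l (i - 2)" "Suc i - 2 = Suc (i - 2)"
      using l by (auto simp: dir Q_dir_even)
    moreover have "\<not> i \<le> 2" "\<not> Suc i \<le> 2" "i - 2 < l - 1" using 4 i by auto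
    ultimately show ?thesis using arc[of "i - 2"] by simp
  qed
qed

lemma semiwalk_Q_extend_to:
  assumes "even l" "4 \<le> l" "even l'" "l \<le> l'" "semiwalk V E v (l - 1) (Q_dir l)"
  shows "\<exists>w. semiwalk V E w (l' - 1) (Q_dir l')"
proof -
  have "\<exists>w. semiwalk V E w (l + 2 * d - 1) (Q_dir (l + 2 * d))" for d
  proof (induction d)
    case 0 then show ?case using assms(5) by auto
  next
    case (Suc d)
    then obtain w where w: "semiwalk V E w (l + 2 * d - 1) (Q_dir (l + 2 * d))" by blast
    have "even (l + 2 * d)" "4 \<le> l + 2 * d" using assms(1,2) by auto
    from semiwalk_Q_extend[OF this w]
    have "\<exists>w. semiwalk V E w (l + 2 * d + 1) (Q_dir (l + 2 * d + 2))" by blast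
    moreover have "l + 2 * Suc d - 1 = l + 2 * d + 1" "l + 2 * Suc d = l + 2 * d + 2"
      using assms(2) by auto
    ultimately show ?case by simp
  qed
  moreover obtain d where "l' = l + 2 * d" using assms(1,3,4) by (metis evenE even_add le_Suc_ex)
  ultimately show ?thesis by simp
qed

lemma AC_arc_iff:
  assumes "odd n"
  shows "(a, b) \<in> AC_arcs n \<longleftrightarrow> a < n \<and> b < n \<and>
     (even a \<and> b = Suc a \<or> a = n - 1 \<and> b = 0 \<or> odd b \<and> a = Suc b)"
proof
  assume "(a, b) \<in> AC_arcs n"
  then obtain i where i: "i < n"
    and "a = i \<and> b = Suc i mod n \<and> even i \<or> a = Suc i mod n \<and> b = i \<and> odd i"
    unfolding AC_arcs_def by blast
  moreover have "Suc i mod n = (if Suc i = n then 0 else Suc i)" using i by (simp add: mod_Suc)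
  moreover have "Suc i \<noteq> n" if "odd i" using that assms by auto
  ultimately show "a < n \<and> b < n \<and> (even a \<and> b = Suc a \<or> a = n - 1 \<and> b = 0 \<or> odd b \<and> a = Suc b)"
    by (cases "Suc i = n") auto
next
  have n: "n - 1 < n" "even (n - 1)" "Suc (n - 1) = n" using assms by (auto simp: odd_pos)
  assume "a < n \<and> b < n \<and> (even a \<and> b = Suc a \<or> a = n - 1 \<and> b = 0 \<or> odd b \<and> a = Suc b)"
  then consider "even a" "b = Suc a" "b < n" | "a = n - 1" "b = 0" | "odd b" "a = Suc b" "a < n" by blast
  then show "(a, b) \<in> AC_arcs n"
  proof cases
    case 1
    then have "(a, Suc a mod n) \<in> AC_arcs n" unfolding AC_arcs_def by auto
    then show ?thesis using 1 by simp
  next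
    case 2
    have "(n - 1, Suc (n - 1) mod n) \<in> AC_arcs n" using n unfolding AC_arcs_def by blast
    then show ?thesis using 2 n by simp
  next
    case 3
    then have "(Suc b mod n, b) \<in> AC_arcs n" unfolding AC_arcs_def by auto
    then show ?thesis using 3 by simp
  qed
qed

lemma AC_arc_of_near_indices:
  assumes "odd n" "even a" "odd b" "a \<le> b + 2" "b \<le> a + 2" "a < n" "b < n"
  shows "(a, b) \<in> AC_arcs n"
proof -
  have "b = Suc a \<or> a = Suc b" using assms(2-5) by presburger
  then show ?thesis using assms by (auto simp: AC_arc_iff)
qed

lemma AC_arc_through_0:
  "odd n \<Longrightarrow> 3 \<le> n \<Longrightarrow> (a, b) \<in> AC_arcs n \<Longrightarrow> (b, c) \<in> AC_arcs n \<Longrightarrow> a = n - 1 \<and> b = 0 \<and> c = 1"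
  by (auto simp: AC_arc_iff; presburger)

lemma AC_arc_from_below: "odd n \<Longrightarrow> (a, b) \<in> AC_arcs n \<Longrightarrow> a < n - 1 \<Longrightarrow> odd b \<and> b \<le> Suc a"
  by (auto simp: AC_arc_iff)

lemma AC_arc_into_odd: "odd n \<Longrightarrow> (a, b) \<in> AC_arcs n \<Longrightarrow> odd b \<Longrightarrow> a \<le> Suc b"
  by (auto simp: AC_arc_iff)

lemma AC_no_Q_semiwalk:
  assumes n: "odd n" and l: "even l" "4 \<le> l" "l \<le> n + 1"
  shows "\<not> semiwalk W (AC_arcs n) w (l - 1) (Q_dir l)"
proof
  assume walk: "semiwalk W (AC_arcs n) w (l - 1) (Q_dir l)"
  define k where "k = (l - 4) div 2"
  have k: "l = 2 * k + 4" using l(1,2) unfolding k_def by presburger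
  have n3: "3 \<le> n" "2 * k + 3 \<le> n" using l k by auto
  have arc: "if Q_dir l i then (w i, w (Suc i)) \<in> AC_arcs n else (w (Suc i), w i) \<in> AC_arcs n"
    if "i < 2 * k + 3" for i
    using walk that k unfolding semiwalk_def by simp
  have fwd: "(w i, w (Suc i)) \<in> AC_arcs n" if "i \<le> 1 \<or> odd i \<or> i = 2 * k + 2" "i \<le> 2 * k + 2" for i
    using arc[of i] that k by (auto simp: Q_dir_even)
  have bwd: "(w (Suc i), w i) \<in> AC_arcs n" if "even i" "2 \<le> i" "i \<le> 2 * k" for i
    using arc[of i] that k by (auto simp: Q_dir_even)
  txt \<open>Only \<open>a\<^sub>0\<close> has both in- and out-arcs, so the walk starts \<open>a\<^sub>n\<^sub>-\<^sub>1 a\<^sub>0 a\<^sub>1\<close> and the two final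
    forward arcs again need \<open>w (2k + 1) = a\<^sub>n\<^sub>-\<^sub>1\<close>, out of reach of the alternating part.\<close>
  have "(w 0, w 1) \<in> AC_arcs n" "(w 1, w 2) \<in> AC_arcs n" using fwd[of 0] fwd[of 1] by (simp_all add: numeral_2_eq_2)
  then have "w 1 = 0" using AC_arc_through_0[OF n n3(1)] by blast
  have bound: "w (2 * j + 1) \<le> 2 * j" if "j \<le> k" for j
    using that
  proof (induction j)
    case 0 then show ?case using \<open>w 1 = 0\<close> by simp
  next
    case (Suc j)
    have "w (2 * j + 1) < n - 1" using Suc n3 by simp
    with AC_arc_from_below[OF n fwd[of "2 * j + 1"]] Suc.prems
    have "odd (w (2 * j + 2)) \<and> w (2 * j + 2) \<le> 2 * j + 1" using Suc by simp
    moreover have "w (2 * j + 3) \<le> Suc (w (2 * j + 2))"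
      using AC_arc_into_odd[OF n bwd[of "2 * j + 2"]] Suc.prems calculation by (simp add: numeral_3_eq_3)
    ultimately show ?case by (simp add: numeral_3_eq_3)
  qed
  have "(w (2 * k + 1), w (2 * k + 2)) \<in> AC_arcs n" "(w (2 * k + 2), w (2 * k + 3)) \<in> AC_arcs n"
    using fwd[of "2 * k + 1"] fwd[of "2 * k + 2"] by (simp_all add: numeral_3_eq_3)
  then have "w (2 * k + 1) = n - 1" using AC_arc_through_0[OF n n3(1)] by blast
  then show False using bound[of k] n3 by simp
qed

lemma homomorphic_AC_if_A0_empty:
  assumes "oriented_graph V E" "odd n" "3 \<le> n" "cc_A0 V E = {}"
  shows "homomorphic V E (AC_verts n) (AC_arcs n)"
proof -
  define f where "f x = (if \<exists>w. (x, w) \<in> E then 2 else 1 :: nat)" for x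
  have "(2, 1) \<in> AC_arcs n" using AC_arc_of_near_indices[OF assms(2), of 2 1] assms(3) by simp
  moreover have "f x = 2" "f y = 1" if "(x, y) \<in> E" for x y
  proof -
    have "y \<in> V" using that assms(1) unfolding oriented_graph_def by blast
    then have "\<nexists>w. (y, w) \<in> E" using that assms(4) unfolding cc_A0_def by blast
    then show "f x = 2" "f y = 1" using that unfolding f_def by auto
  qed
  moreover have "f x \<in> AC_verts n" for x using assms(3) unfolding f_def AC_verts_def by simp
  ultimately have "hom V E (AC_verts n) (AC_arcs n) f" unfolding hom_def by auto
  then show ?thesis unfolding homomorphic_def by blast
qed

definition is_source :: "('a \<times> 'a) set \<Rightarrow> 'a \<Rightarrow> bool" where
  "is_source E x \<longleftrightarrow> (\<exists>y. (x, y) \<in> E) \<and> (\<forall>y. (y, x) \<notin> E)"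

definition is_sink :: "('a \<times> 'a) set \<Rightarrow> 'a \<Rightarrow> bool" where
  "is_sink E x \<longleftrightarrow> (\<exists>y. (y, x) \<in> E) \<and> (\<forall>y. (x, y) \<notin> E)"

lemma is_source_converse [simp]: "is_source (E\<inverse>) x = is_sink E x"
  by (auto simp: is_source_def is_sink_def)

lemma is_sink_converse [simp]: "is_sink (E\<inverse>) x = is_source E x"
  by (auto simp: is_source_def is_sink_def)

lemma not_source_and_sink: "is_source E x \<Longrightarrow> \<not> is_sink E x"
  by (auto simp: is_source_def is_sink_def)

lemma cc_A0_converse [simp]: "cc_A0 V (E\<inverse>) = cc_A0 V E"
  by (auto simp: cc_A0_def)

lemma cc_layers_converse:
  "cc_layers V (E\<inverse>) (Suc t) = (case cc_layers V E (Suc t) of (A, D, C) \<Rightarrow> (D, A, C))"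
proof (induction t)
  case 0 then show ?case by (auto simp: Let_def)
next
  case (Suc t) then show ?case by (auto simp: Let_def Un_ac split: prod.splits)
qed

(* The pattern of Q_l without its last arc. *)
definition zigzag_dir :: "nat \<Rightarrow> bool" where
  "zigzag_dir i \<longleftrightarrow> i \<le> 1 \<or> odd i"

locale oriented_digraph =
  fixes V :: "'a set" and E :: "('a \<times> 'a) set"
  assumes oriented: "oriented_graph V E"
begin

abbreviation "A0 \<equiv> cc_A0 V E"
abbreviation "A_layer t \<equiv> fst (cc_layers V E t)"
abbreviation "D_layer t \<equiv> fst (snd (cc_layers V E t))"
abbreviation "C_layer t \<equiv> snd (snd (cc_layers V E t))"

lemma arc_in_V: "(x, y) \<in> E \<Longrightarrow> x \<in> V \<and> y \<in> V"
  using oriented unfolding oriented_graph_def by auto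

lemma converse: "oriented_digraph V (E\<inverse>)"
  using oriented by unfold_locales (auto simp: oriented_graph_def)

lemma A0_arcs: "x \<in> A0 \<Longrightarrow> x \<in> V \<and> (\<exists>u. (u, x) \<in> E) \<and> (\<exists>w. (x, w) \<in> E)"
  unfolding cc_A0_def by blast

lemma sink_if_not_A0: "x \<notin> A0 \<Longrightarrow> (u, x) \<in> E \<Longrightarrow> is_sink E x"
  using arc_in_V unfolding cc_A0_def is_sink_def by blast

lemma source_if_not_A0: "x \<notin> A0 \<Longrightarrow> (x, w) \<in> E \<Longrightarrow> is_source E x"
  using arc_in_V unfolding cc_A0_def is_source_def by blast

lemma layer_0 [simp]: "A_layer 0 = A0" "C_layer 0 = A0"
  by simp_all

lemma layer_1:
  "A_layer (Suc 0) = {x \<in> V - A0. \<exists>y\<in>A0. (y, x) \<in> E}"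
  "D_layer (Suc 0) = {x \<in> V - A0. \<exists>y\<in>A0. (x, y) \<in> E}"
  "C_layer (Suc 0) = A0 \<union> A_layer (Suc 0) \<union> D_layer (Suc 0)"
  by (simp_all add: Let_def)

lemma layer_Suc_Suc:
  "A_layer (Suc (Suc t)) = {x \<in> V - C_layer (Suc t). \<exists>y\<in>A_layer (Suc t). (x, y) \<in> E \<or> (y, x) \<in> E}"
  "D_layer (Suc (Suc t)) = {x \<in> V - C_layer (Suc t). \<exists>y\<in>D_layer (Suc t). (x, y) \<in> E \<or> (y, x) \<in> E}"
  "C_layer (Suc (Suc t)) = C_layer (Suc t) \<union> A_layer (Suc (Suc t)) \<union> D_layer (Suc (Suc t))"
  by (cases "cc_layers V E (Suc t)"; simp add: Let_def)+

declare cc_layers.simps [simp del]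

lemma C_layer_Suc: "C_layer (Suc t) = C_layer t \<union> A_layer (Suc t) \<union> D_layer (Suc t)"
  by (cases t) (simp_all only: layer_1 layer_Suc_Suc layer_0)

lemma C_layer_mono: "s \<le> t \<Longrightarrow> C_layer s \<subseteq> C_layer t"
  by (induction t rule: dec_induct) (auto simp: C_layer_Suc)

lemma layer_Suc_new: "A_layer (Suc t) \<union> D_layer (Suc t) \<subseteq> V - C_layer t"
  by (cases t) (auto simp: layer_1 layer_Suc_Suc)

lemma layer_Suc_not_A0: "x \<in> A_layer (Suc t) \<union> D_layer (Suc t) \<Longrightarrow> x \<notin> A0"
  using layer_Suc_new[of t] C_layer_mono[of 0 t] by auto

lemma C_layer_neighbour: "x \<in> C_layer t \<Longrightarrow> (x, y) \<in> E \<or> (y, x) \<in> E \<Longrightarrow> y \<in> C_layer (Suc t)"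
proof (induction t)
  case 0 then show ?case using arc_in_V by (auto simp: layer_1)
next
  case (Suc t)
  then consider "x \<in> C_layer t" | "x \<in> A_layer (Suc t) \<union> D_layer (Suc t)"
    by (auto simp: C_layer_Suc)
  then show ?case
  proof cases
    case 1 then show ?thesis using Suc by (auto simp: C_layer_Suc)
  next
    case 2 then show ?thesis using Suc.prems arc_in_V by (auto simp: layer_Suc_Suc)
  qed
qed

lemma C_layer_cases: "x \<in> C_layer t \<Longrightarrow> x \<in> A0 \<or> (\<exists>s. 0 < s \<and> s \<le> t \<and> x \<in> A_layer s \<union> D_layer s)"
proof (induction t)
  case (Suc t) then show ?case by (auto simp: C_layer_Suc intro: le_SucI)
qed simp

lemma A_layer_type: "0 < t \<Longrightarrow> x \<in> A_layer t \<Longrightarrow> if odd t then is_sink E x else is_source E x"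
proof (induction t arbitrary: x)
  case (Suc t)
  have x: "x \<notin> A0" using Suc.prems layer_Suc_not_A0 by blast
  show ?case
  proof (cases t)
    case 0
    then show ?thesis using Suc.prems sink_if_not_A0[OF x] by (auto simp: layer_1)
  next
    case (Suc s)
    then obtain y where y: "y \<in> A_layer t" "(x, y) \<in> E \<or> (y, x) \<in> E"
      using Suc.prems by (auto simp: layer_Suc_Suc)
    have "if odd t then is_sink E y else is_source E y" using Suc.IH[OF _ y(1)] Suc by simp
    then show ?thesis using y(2) sink_if_not_A0[OF x] source_if_not_A0[OF x]
      by (auto simp: is_source_def is_sink_def split: if_splits)
  qed
qed simp

lemma A_layer_Suc_arc: "x \<in> A_layer (Suc t) \<Longrightarrow> \<exists>y\<in>A_layer t. if even t then (y, x) \<in> E else (x, y) \<in> E"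
proof (cases t)
  case 0
  then show "x \<in> A_layer (Suc t) \<Longrightarrow> ?thesis" by (auto simp: layer_1)
next
  case (Suc s)
  assume x: "x \<in> A_layer (Suc t)"
  then obtain y where y: "y \<in> A_layer t" "(x, y) \<in> E \<or> (y, x) \<in> E"
    using Suc by (auto simp: layer_Suc_Suc)
  have "if odd (Suc t) then is_sink E x else is_source E x" by (rule A_layer_type[OF _ x]) simp
  then show ?thesis using y by (auto simp: is_source_def is_sink_def split: if_splits)
qed

lemma A_layer_zigzag: "x \<in> A_layer t \<Longrightarrow> \<exists>w. semiwalk V E w (Suc t) zigzag_dir \<and> w (Suc t) = x"
proof (induction t arbitrary: x)
  case 0
  then obtain u where u: "(u, x) \<in> E" using A0_arcs by auto
  then have "semiwalk V E (\<lambda>i. if i = 0 then u else x) 1 zigzag_dir"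
    using arc_in_V by (auto simp: semiwalk_def zigzag_dir_def le_Suc_eq)
  then show ?case by auto
next
  case (Suc t)
  obtain y where y: "y \<in> A_layer t" "if even t then (y, x) \<in> E else (x, y) \<in> E"
    using A_layer_Suc_arc[OF Suc.prems] by blast
  obtain w where w: "semiwalk V E w (Suc t) zigzag_dir" "w (Suc t) = y" using Suc.IH[OF y(1)] by blast
  have "zigzag_dir (Suc t) = even t" by (auto simp: zigzag_dir_def)
  then have "if zigzag_dir (Suc t) then (w (Suc t), x) \<in> E else (x, w (Suc t)) \<in> E"
    using w(2) y(2) by simp
  moreover have "x \<in> V" using y(2) arc_in_V by (auto split: if_splits)
  ultimately have "semiwalk V E (w(Suc (Suc t) := x)) (Suc (Suc t)) zigzag_dir"
    using semiwalk_snoc[OF w(1)] by blast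
  then show ?case by auto
qed

lemma D_layer_eq_converse: "0 < t \<Longrightarrow> D_layer t = fst (cc_layers V (E\<inverse>) t)"
  by (cases t) (auto simp: cc_layers_converse split: prod.splits)

lemma D_layer_type:
  assumes "0 < t" "x \<in> D_layer t"
  shows "if odd t then is_source E x else is_sink E x"
proof -
  have "x \<in> fst (cc_layers V (E\<inverse>) t)" using assms D_layer_eq_converse by simp
  then have "if odd t then is_sink (E\<inverse>) x else is_source (E\<inverse>) x"
    by (rule oriented_digraph.A_layer_type[OF converse \<open>0 < t\<close>])
  then show ?thesis by (simp split: if_splits)
qed

lemma D_layer_zigzag:
  assumes "0 < t" "x \<in> D_layer t"
  shows "\<exists>w. semiwalk V E w (Suc t) (\<lambda>i. \<not> zigzag_dir i) \<and> w (Suc t) = x"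
proof -
  have "x \<in> fst (cc_layers V (E\<inverse>) t)" using assms D_layer_eq_converse by simp
  then have "\<exists>w. semiwalk V (E\<inverse>) w (Suc t) zigzag_dir \<and> w (Suc t) = x"
    by (rule oriented_digraph.A_layer_zigzag[OF converse])
  then show ?thesis by (simp add: semiwalk_converse)
qed

lemma A_D_arc_Q_semiwalk:
  assumes st: "0 < s" "0 < t" and x: "x \<in> A_layer s" and y: "y \<in> D_layer t"
    and xy: "(x, y) \<in> E \<or> (y, x) \<in> E"
  shows "even (s + t) \<and> (\<exists>w. semiwalk V E w (s + t + 3) (Q_dir (s + t + 4)))"
proof -
  have x_type: "if odd s then is_sink E x else is_source E x" using A_layer_type[OF st(1) x] .
  have y_type: "if odd t then is_source E y else is_sink E y" using D_layer_type[OF st(2) y] .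
  have "even (s + t)"
    using x_type y_type xy by (auto simp: is_source_def is_sink_def split: if_splits)
  obtain u where u: "semiwalk V E u (Suc s) zigzag_dir" "u (Suc s) = x"
    using A_layer_zigzag[OF x] by blast
  obtain v where v: "semiwalk V E v (Suc t) (\<lambda>i. \<not> zigzag_dir i)" "v (Suc t) = y"
    using D_layer_zigzag[OF st(2) y] by blast
  have "zigzag_dir (Suc s) = even s" using st(1) by (auto simp: zigzag_dir_def)
  then have "if zigzag_dir (Suc s) then (u (Suc s), y) \<in> E else (y, u (Suc s)) \<in> E"
    using x_type xy u(2) by (auto simp: is_source_def is_sink_def split: if_splits)
  moreover have "y \<in> V" using xy arc_in_V by blast
  ultimately have u': "semiwalk V E (u(Suc (Suc s) := y)) (Suc (Suc s)) zigzag_dir"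
    using semiwalk_snoc[OF u(1)] by blast
  txt \<open>The \<open>Q\<close>-semi-walk is the zigzag into \<open>x\<close>, the arc between \<open>x\<close> and \<open>y\<close>, and the reversed
    zigzag into \<open>y\<close>.\<close>
  have v': "semiwalk V E (\<lambda>i. v (Suc t - i)) (Suc t) (\<lambda>i. zigzag_dir (t - i))"
    using semiwalk_reverse[OF v(1)] by simp
  define P where "P = (\<lambda>i. if i < Suc (Suc s) then zigzag_dir i else zigzag_dir (t - (i - Suc (Suc s))))"
  have "(\<lambda>i. v (Suc t - i)) 0 = (u(Suc (Suc s) := y)) (Suc (Suc s))" using v(2) by simp
  from semiwalk_append[OF u' v' this]
  have "\<exists>w. semiwalk V E w (Suc (Suc s) + Suc t) P" unfolding P_def by blast
  moreover have "Suc (Suc s) + Suc t = s + t + 3" by simp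
  ultimately obtain w where "semiwalk V E w (s + t + 3) P" by metis
  moreover have "P i = Q_dir (s + t + 4) i" if "i < s + t + 3" for i
    using that st \<open>even (s + t)\<close> unfolding P_def by (auto simp: Q_dir_even zigzag_dir_def) presburger+
  ultimately show ?thesis using \<open>even (s + t)\<close> semiwalk_cong by blast
qed

end

definition Q_semiwalk_free :: "'a set \<Rightarrow> ('a \<times> 'a) set \<Rightarrow> nat \<Rightarrow> bool" where
  "Q_semiwalk_free V E n \<longleftrightarrow>
     (\<forall>l v. even l \<longrightarrow> 4 \<le> l \<longrightarrow> l \<le> n + 1 \<longrightarrow> \<not> semiwalk V E v (l - 1) (Q_dir l))"

lemma connected_digraph_boundary_arc:
  assumes "connected_digraph V E" "a \<in> S" "a \<in> V" "r \<in> V" "r \<notin> S"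
  shows "\<exists>z\<in>S. \<exists>z'. z' \<notin> S \<and> ((z, z') \<in> E \<or> (z', z) \<in> E)"
proof -
  have "(r, a) \<in> (E \<union> E\<inverse>)\<^sup>*" using assms unfolding connected_digraph_def by blast
  then show ?thesis using \<open>r \<notin> S\<close>
  proof (induction rule: converse_rtrancl_induct)
    case base then show ?case using \<open>a \<in> S\<close> by blast
  next
    case (step z z')
    then show ?case by (cases "z' \<in> S") blast+
  qed
qed

locale Q_free_graph = oriented_digraph +
  fixes n m :: nat
  assumes n_eq: "n = 2 * m + 1" and m_ge_2: "2 \<le> m"
    and connected: "connected_digraph V E"
    and Q_free: "Q_semiwalk_free V E n"
    and A0_nonempty: "A0 \<noteq> {}"
begin

abbreviation "R \<equiv> V - C_layer (m - 1)"
abbreviation "cls \<equiv> cc_class V E n"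

lemma no_Q_semiwalk: "even l \<Longrightarrow> 4 \<le> l \<Longrightarrow> l \<le> n + 1 \<Longrightarrow> \<not> semiwalk V E v (l - 1) (Q_dir l)"
  using Q_free unfolding Q_semiwalk_free_def by blast

lemma no_arc_in_A0: "x \<in> A0 \<Longrightarrow> y \<in> A0 \<Longrightarrow> (x, y) \<notin> E"
proof
  assume x: "x \<in> A0" and y: "y \<in> A0" and xy: "(x, y) \<in> E"
  obtain u w where "(u, x) \<in> E" "(y, w) \<in> E" using A0_arcs x y by blast
  then have "semiwalk V E (\<lambda>i. if i = 0 then u else if i = 1 then x else if i = 2 then y else w) 3 (Q_dir 4)"
    using xy arc_in_V by (auto simp: semiwalk_def Q_dir_def numeral_3_eq_3 numeral_2_eq_2 less_Suc_eq le_Suc_eq)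
  then show False using no_Q_semiwalk[of 4] n_eq m_ge_2 by simp
qed

lemma no_arc_A_D:
  assumes "0 < s" "s < m" "0 < t" "t < m" "x \<in> A_layer s" "y \<in> D_layer t"
  shows "(x, y) \<notin> E \<and> (y, x) \<notin> E"
proof (rule ccontr)
  assume "\<not> ((x, y) \<notin> E \<and> (y, x) \<notin> E)"
  then obtain w where ev: "even (s + t)" and walk: "semiwalk V E w (s + t + 3) (Q_dir (s + t + 4))"
    using A_D_arc_Q_semiwalk[OF assms(1,3,5,6)] by blast
  have "even (s + t + 4)" "4 \<le> s + t + 4" "s + t + 4 \<le> n + 1" using ev assms n_eq by auto
  from no_Q_semiwalk[OF this] show False using walk by (simp add: ac_simps)
qed

lemma no_isolated_vertex: "x \<in> V \<Longrightarrow> \<exists>y. (x, y) \<in> E \<or> (y, x) \<in> E"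
proof -
  assume x: "x \<in> V"
  obtain a w where a: "a \<in> A0" "(a, w) \<in> E" using A0_nonempty A0_arcs by blast
  show ?thesis
  proof (cases "x = a")
    case False
    then obtain z z' where "z' \<notin> V - {x}" "(z, z') \<in> E \<or> (z', z) \<in> E"
      using connected_digraph_boundary_arc[OF connected, of a "V - {x}" x] a A0_arcs x by blast
    then show ?thesis using arc_in_V by blast
  qed (use a in blast)
qed

lemma source_or_sink: "x \<in> V \<Longrightarrow> x \<notin> A0 \<Longrightarrow> is_source E x \<or> is_sink E x"
  using no_isolated_vertex source_if_not_A0 sink_if_not_A0 by blast

lemma last_layer_nonempty: "R \<noteq> {} \<Longrightarrow> A_layer (m - 1) \<union> D_layer (m - 1) \<noteq> {}"
proof -
  assume "R \<noteq> {}"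
  then obtain r where r: "r \<in> V" "r \<notin> C_layer (m - 1)" by blast
  obtain a where a: "a \<in> A0" using A0_nonempty by blast
  then have "a \<in> C_layer (m - 1)" "a \<in> V" using C_layer_mono[of 0 "m - 1"] A0_arcs by auto
  then obtain z z' where z: "z \<in> C_layer (m - 1)" "z' \<notin> C_layer (m - 1)" "(z, z') \<in> E \<or> (z', z) \<in> E"
    using connected_digraph_boundary_arc[OF connected _ _ r] by blast
  have m1: "m - 1 = Suc (m - 2)" using m_ge_2 by simp
  have "z \<notin> C_layer (m - 2)" using C_layer_neighbour[of z "m - 2" z'] z m1 by auto
  then show ?thesis using z(1) m1 by (auto simp: C_layer_Suc)
qed

lemma class_0: "cls 0 = A0"
  using m_ge_2 by (simp add: cc_class_def cc_A_def n_eq)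

lemma class_A: "0 < t \<Longrightarrow> t < m \<Longrightarrow> cls t = A_layer t"
  by (simp add: cc_class_def cc_A_def n_eq)

lemma class_D:
  assumes "0 < t" "t < m"
  shows "cls (n - t) = D_layer t"
proof -
  have "\<not> n - t \<le> (n - 1) div 2" "n - t < n" "n - (n - t) = t" using assms n_eq by auto
  then show ?thesis using assms n_eq by (simp add: cc_class_def cc_D_def)
qed

lemma R_source_or_sink: "x \<in> R \<Longrightarrow> is_source E x \<or> is_sink E x"
  using source_or_sink C_layer_mono[of 0 "m - 1"] by auto

lemma cc_last_eq:
  "cc_last V E n = (if even m then ({x \<in> R. is_source E x}, {x \<in> R. is_sink E x})
                    else ({x \<in> R. is_sink E x}, {x \<in> R. is_source E x}))"
proof -
  let ?cond = "(\<forall>x\<in>A_layer (m - 1). \<nexists>y. (x, y) \<in> E) \<and> (\<forall>x\<in>D_layer (m - 1). \<nexists>y. (y, x) \<in> E)"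
  have "(n - 1) div 2 - 1 = m - 1" using n_eq by simp
  then have last: "cc_last V E n = (if ?cond
      then ({x \<in> R. \<nexists>y. (y, x) \<in> E}, {x \<in> R. \<nexists>y. (x, y) \<in> E})
      else ({x \<in> R. \<nexists>y. (x, y) \<in> E}, {x \<in> R. \<nexists>y. (y, x) \<in> E}))"
    unfolding cc_last_def by (simp add: split_beta)
  have no_in: "{x \<in> R. \<nexists>y. (y, x) \<in> E} = {x \<in> R. is_source E x}"
    using R_source_or_sink by (auto simp: is_source_def is_sink_def)
  have no_out: "{x \<in> R. \<nexists>y. (x, y) \<in> E} = {x \<in> R. is_sink E x}"
    using R_source_or_sink by (auto simp: is_source_def is_sink_def)
  show ?thesis
  proof (cases "R = {}")
    case True
    then show ?thesis unfolding last by auto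
  next
    case False
    have m1: "0 < m - 1" "odd (m - 1) \<longleftrightarrow> even m" using m_ge_2 by auto
    have "?cond \<longleftrightarrow> even m"
      using A_layer_type[OF m1(1)] D_layer_type[OF m1(1)] last_layer_nonempty[OF False] m1(2)
      by (auto simp: is_source_def is_sink_def split: if_splits)
    then show ?thesis unfolding last no_in no_out by simp
  qed
qed

lemma class_m: "cls m = {x \<in> R. if even m then is_source E x else is_sink E x}"
proof -
  have "(n - 1) div 2 = m" using n_eq by simp
  then show ?thesis by (simp add: cc_class_def cc_A_def cc_last_eq)
qed

lemma class_Suc_m: "cls (Suc m) = {x \<in> R. if even m then is_sink E x else is_source E x}"
proof -
  have "(n - 1) div 2 = m" "n - Suc m = m" "Suc m < n" "0 < m" using n_eq m_ge_2 by simp_all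
  then show ?thesis by (simp add: cc_class_def cc_D_def cc_last_eq)
qed

(* band t = A_t \<union> D_t in the paper's notation; the last band R = V - C_(m-1) is A_m \<union> D_m. *)
definition band :: "nat \<Rightarrow> 'a set" where
  "band t = (if t = 0 then A0 else if t < m then A_layer t \<union> D_layer t else R)"

lemma band_subset_C_layer: "t < m \<Longrightarrow> band t \<subseteq> C_layer t"
  by (cases t) (auto simp: band_def C_layer_Suc)

lemma band_disjoint_C_layer: "0 < t \<Longrightarrow> t \<le> m \<Longrightarrow> band t \<inter> C_layer (t - 1) = {}"
  using layer_Suc_new[of "t - 1"] by (auto simp: band_def)

lemma band_adjacent:
  assumes "s \<le> m" "t \<le> m" "x \<in> band s" "y \<in> band t" "(x, y) \<in> E \<or> (y, x) \<in> E"
  shows "t \<le> Suc s"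
proof (rule ccontr)
  assume "\<not> t \<le> Suc s"
  then have "y \<in> C_layer (Suc s)"
    using C_layer_neighbour[of x s y] band_subset_C_layer[of s] assms by auto
  moreover have "Suc s \<le> t - 1" using \<open>\<not> t \<le> Suc s\<close> by linarith
  ultimately have "y \<in> C_layer (t - 1)" using C_layer_mono by blast
  then show False using band_disjoint_C_layer[of t] assms(2,4) \<open>\<not> t \<le> Suc s\<close> by auto
qed

lemma band_disjoint: "s < t \<Longrightarrow> t \<le> m \<Longrightarrow> band s \<inter> band t = {}"
  using band_subset_C_layer[of s] C_layer_mono[of s "t - 1"] band_disjoint_C_layer[of t] by force

lemma class_n: "cls n = {}"
  using n_eq by (simp add: cc_class_def)

lemma band_eq_classes: "t \<le> m \<Longrightarrow> band t = cls t \<union> cls (n - t)"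
proof -
  assume "t \<le> m"
  then consider "t = 0" | "0 < t" "t < m" | "t = m" by linarith
  then show ?thesis
  proof cases
    case 1 then show ?thesis by (simp add: band_def class_0 class_n)
  next
    case 2 then show ?thesis by (simp add: band_def class_A class_D)
  next
    case 3
    have "n - m = Suc m" using n_eq by simp
    then show ?thesis using 3 R_source_or_sink m_ge_2 by (auto simp: band_def class_m class_Suc_m)
  qed
qed

lemma vertex_in_band: "x \<in> V \<Longrightarrow> \<exists>t\<le>m. x \<in> band t"
proof (cases "x \<in> C_layer (m - 1)")
  case True
  from C_layer_cases[OF this] show ?thesis
  proof
    assume "x \<in> A0" then show ?thesis unfolding band_def by (intro exI[of _ 0]) simp
  next
    assume "\<exists>s. 0 < s \<and> s \<le> m - 1 \<and> x \<in> A_layer s \<union> D_layer s"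
    then obtain s where "0 < s" "s \<le> m - 1" "x \<in> A_layer s \<union> D_layer s" by blast
    moreover have "s < m" using \<open>s \<le> m - 1\<close> m_ge_2 by linarith
    ultimately show ?thesis unfolding band_def by (intro exI[of _ s]) auto
  qed
qed (intro exI[of _ m], use m_ge_2 in \<open>simp add: band_def\<close>)

lemma class_in_band: "k < n \<Longrightarrow> x \<in> cls k \<Longrightarrow> \<exists>t\<le>m. x \<in> band t \<and> (k = t \<or> k + t = n)"
proof (cases "k \<le> m")
  case True
  then show "x \<in> cls k \<Longrightarrow> ?thesis" using band_eq_classes[of k] by blast
next
  case False
  assume "k < n" "x \<in> cls k"
  moreover have "n - k \<le> m" "n - (n - k) = k" "k + (n - k) = n" using False \<open>k < n\<close> n_eq by auto
  ultimately show ?thesis using band_eq_classes[of "n - k"] by auto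
qed

lemma class_parity: "0 < k \<Longrightarrow> k < n \<Longrightarrow> x \<in> cls k \<Longrightarrow> if even k then is_source E x else is_sink E x"
proof -
  assume k: "0 < k" "k < n" and x: "x \<in> cls k"
  consider "k < m" | "k = m" | "k = Suc m" | "Suc m < k" by linarith
  then show ?thesis
  proof cases
    case 1 then show ?thesis using A_layer_type[of k x] x k class_A by simp
  next
    case 2 then show ?thesis using x class_m by simp
  next
    case 3 then show ?thesis using x class_Suc_m by simp
  next
    case 4
    then have "0 < n - k" "n - k < m" "n - (n - k) = k" "odd (n - k) \<longleftrightarrow> even k" using k n_eq by auto
    then show ?thesis using D_layer_type[of "n - k" x] x class_D[of "n - k"] by simp
  qed
qed

lemma classes_of_band_disjoint: "0 < t \<Longrightarrow> t \<le> m \<Longrightarrow> cls t \<inter> cls (n - t) = {}"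
proof (cases "t < m")
  case True
  assume "0 < t"
  then show ?thesis using True A_layer_type[of t] D_layer_type[of t] not_source_and_sink
    by (fastforce simp: class_A class_D split: if_splits)
next
  case False
  assume "t \<le> m"
  then have "t = m" "n - t = Suc m" using False n_eq by auto
  then show ?thesis by (auto simp: class_m class_Suc_m dest: not_source_and_sink)
qed

lemma class_unique: "j < n \<Longrightarrow> k < n \<Longrightarrow> x \<in> cls j \<Longrightarrow> x \<in> cls k \<Longrightarrow> j = k"
proof -
  assume jk: "j < n" "k < n" and x: "x \<in> cls j" "x \<in> cls k"
  obtain s t where s: "s \<le> m" "x \<in> band s" "j = s \<or> j + s = n"
    and t: "t \<le> m" "x \<in> band t" "k = t \<or> k + t = n"
    using class_in_band jk x by meson
  have "s = t" using band_disjoint[of s t] band_disjoint[of t s] s t by (metis disjoint_iff linorder_neqE_nat)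
  show "j = k"
  proof (rule ccontr)
    assume "j \<noteq> k"
    then have "0 < t" "j = t \<and> k = n - t \<or> j = n - t \<and> k = t" using s(3) t(3) \<open>s = t\<close> jk by auto
    then show False using classes_of_band_disjoint[of t] t(1) x by auto
  qed
qed

lemma class_exists: "x \<in> V \<Longrightarrow> \<exists>k<n. x \<in> cls k"
proof -
  assume "x \<in> V"
  then obtain t where "t \<le> m" "x \<in> cls t \<union> cls (n - t)" using vertex_in_band band_eq_classes by blast
  moreover have "t < n" "t \<noteq> 0 \<Longrightarrow> n - t < n" using \<open>t \<le> m\<close> n_eq by auto
  ultimately show ?thesis
  proof (cases "x \<in> cls t")
    case False
    then have x: "x \<in> cls (n - t)" using \<open>x \<in> cls t \<union> cls (n - t)\<close> by blast
    then have "t \<noteq> 0" using class_n by (intro notI) simp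
    then show ?thesis using x \<open>t \<noteq> 0 \<Longrightarrow> n - t < n\<close> by blast
  qed blast
qed

lemma mem_A0_iff_class_0: "k < n \<Longrightarrow> x \<in> cls k \<Longrightarrow> x \<in> A0 \<longleftrightarrow> k = 0"
  using class_unique[of 0 k x] class_0 n_eq by auto

lemma arc_class_parity:
  assumes xy: "(x, y) \<in> E" and a: "a < n" "x \<in> cls a" and b: "b < n" "y \<in> cls b"
  shows "(a = 0 \<or> even a) \<and> (b = 0 \<or> odd b) \<and> (a \<noteq> 0 \<or> b \<noteq> 0)"
proof -
  have "even a" if "a \<noteq> 0"
    using class_parity[OF _ a] source_if_not_A0[OF _ xy] mem_A0_iff_class_0[OF a] that
    by (auto split: if_splits dest: not_source_and_sink)
  moreover have "odd b" if "b \<noteq> 0"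
    using class_parity[OF _ b] sink_if_not_A0[OF _ xy] mem_A0_iff_class_0[OF b] that
    by (auto split: if_splits dest: not_source_and_sink)
  moreover have "a \<noteq> 0 \<or> b \<noteq> 0" using no_arc_in_A0 xy mem_A0_iff_class_0 a b by blast
  ultimately show ?thesis by blast
qed

lemma arc_class_indices:
  assumes xy: "(x, y) \<in> E" and a: "a < n" "x \<in> cls a" and b: "b < n" "y \<in> cls b"
  shows "(a, b) \<in> AC_arcs n"
proof -
  have parity: "a = 0 \<or> even a" "b = 0 \<or> odd b" "a \<noteq> 0 \<or> b \<noteq> 0"
    using arc_class_parity[OF assms] by blast+
  obtain s t where s: "s \<le> m" "x \<in> band s" "a = s \<or> a + s = n"
    and t: "t \<le> m" "y \<in> band t" "b = t \<or> b + t = n"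
    using class_in_band a b by meson
  have close: "t \<le> Suc s" "s \<le> Suc t" using band_adjacent s t xy by blast+
  have sides: "\<not> (0 < s \<and> s < m \<and> 0 < t \<and> t < m \<and> (a = s \<and> b + t = n \<or> a + s = n \<and> b = t))"
  proof
    assume st: "0 < s \<and> s < m \<and> 0 < t \<and> t < m \<and> (a = s \<and> b + t = n \<or> a + s = n \<and> b = t)"
    then consider "a = s" "b = n - t" | "a = n - s" "b = t" by force
    then show False
    proof cases
      case 1 then show ?thesis using no_arc_A_D[of s t x y] st a b xy class_A class_D by auto
    next
      case 2 then show ?thesis using no_arc_A_D[of t s y x] st a b xy class_A class_D by auto
    qed
  qed
  show ?thesis
  proof (cases "a = 0 \<or> b = 0")
    case True
    then have "a = 0 \<and> b = 1 \<or> a = n - 1 \<and> b = 0"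
      using parity s(1,3) t(1,3) close a(1) b(1) n_eq by auto presburger+
    then show ?thesis using n_eq m_ge_2 AC_arc_of_near_indices[of n 0 1] by (auto simp: AC_arc_iff)
  next
    case False
    then have "a \<le> b + 2" "b \<le> a + 2" using s(1,3) t(1,3) close sides a(1) b(1) n_eq by auto
    then show ?thesis using False parity a(1) b(1) n_eq by (auto intro: AC_arc_of_near_indices)
  qed
qed

theorem cc_map_hom:
  "(\<forall>x\<in>V. \<exists>!k. k < n \<and> x \<in> cls k) \<and> hom V E (AC_verts n) (AC_arcs n) (cc_map V E n)"
proof -
  have map: "cc_map V E n x = k" if "k < n" "x \<in> cls k" for x k
    unfolding cc_map_def using that class_unique by blast
  have "cc_map V E n x \<in> AC_verts n" if "x \<in> V" for x
    using class_exists[OF that] map unfolding AC_verts_def by force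
  moreover have "(cc_map V E n x, cc_map V E n y) \<in> AC_arcs n" if xy: "(x, y) \<in> E" for x y
  proof -
    obtain a b where "a < n" "x \<in> cls a" "b < n" "y \<in> cls b"
      using class_exists arc_in_V[OF xy] by blast
    then show ?thesis using arc_class_indices[OF xy] map by simp
  qed
  ultimately show ?thesis using class_exists class_unique unfolding hom_def by blast
qed

end

lemma cyclic_cover_hom:
  assumes "odd n" "5 \<le> n" "oriented_graph V E" "connected_digraph V E"
    and "Q_semiwalk_free V E n" "cc_A0 V E \<noteq> {}"
  shows "(\<forall>x\<in>V. \<exists>!k. k < n \<and> x \<in> cc_class V E n k) \<and> hom V E (AC_verts n) (AC_arcs n) (cc_map V E n)"
proof -
  interpret Q_free_graph V E n "n div 2"
    using assms by unfold_locales auto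
  show ?thesis by (rule cc_map_hom)
qed

lemma homomorphic_AC_iff_Q_semiwalk_free:
  assumes "odd n" "5 \<le> n" "oriented_graph V E" "connected_digraph V E"
  shows "homomorphic V E (AC_verts n) (AC_arcs n) \<longleftrightarrow> Q_semiwalk_free V E n"
proof
  assume "homomorphic V E (AC_verts n) (AC_arcs n)"
  then obtain f where "hom V E (AC_verts n) (AC_arcs n) f" unfolding homomorphic_def by blast
  then show "Q_semiwalk_free V E n"
    using semiwalk_hom AC_no_Q_semiwalk[OF assms(1)] unfolding Q_semiwalk_free_def by blast
next
  assume "Q_semiwalk_free V E n"
  then show "homomorphic V E (AC_verts n) (AC_arcs n)"
    using homomorphic_AC_if_A0_empty[OF assms(3,1)] cyclic_cover_hom[OF assms] assms(2)
    unfolding homomorphic_def by fastforce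
qed

lemma Q_semiwalk_free_iff_no_Q_hom:
  assumes "odd n" "3 \<le> n"
  shows "Q_semiwalk_free V E n \<longleftrightarrow> \<not> homomorphic (Q_verts (n + 1)) (Q_arcs (n + 1)) V E"
proof -
  have n1: "even (n + 1)" "4 \<le> n + 1" using assms by auto
  have "homomorphic (Q_verts (n + 1)) (Q_arcs (n + 1)) V E \<longleftrightarrow> (\<exists>v. semiwalk V E v (n + 1 - 1) (Q_dir (n + 1)))"
    unfolding homomorphic_def using hom_Q_iff_semiwalk[of "n + 1" V E] by auto
  moreover have "\<not> Q_semiwalk_free V E n \<longleftrightarrow> (\<exists>v. semiwalk V E v (n + 1 - 1) (Q_dir (n + 1)))"
    unfolding Q_semiwalk_free_def using semiwalk_Q_extend_to[of _ "n + 1"] n1 by blast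
  ultimately show ?thesis by blast
qed

theorem mainTheorem7:
  fixes V :: "'a set" and E :: "('a \<times> 'a) set" and n :: nat
  assumes "odd n" and "5 \<le> n"
    and "finite V" and "oriented_graph V E" and "connected_digraph V E"
  shows "(homomorphic V E (AC_verts n) (AC_arcs n)
            \<longleftrightarrow> (\<forall>l. even l \<and> 4 \<le> l \<and> l \<le> n + 1 \<longrightarrow>
                    \<not> (\<exists>v. semiwalk_with_pattern V E v (Q_pattern l))))
       \<and> ((\<forall>l. even l \<and> 4 \<le> l \<and> l \<le> n + 1 \<longrightarrow>
                    \<not> (\<exists>v. semiwalk_with_pattern V E v (Q_pattern l)))
            \<longleftrightarrow> \<not> homomorphic (Q_verts (n + 1)) (Q_arcs (n + 1)) V E)
       \<and> ((\<exists>x\<in>V. (\<exists>u. (u, x) \<in> E) \<and> (\<exists>w. (x, w) \<in> E)) \<longrightarrow>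
            (homomorphic V E (AC_verts n) (AC_arcs n)
             \<longleftrightarrow> (\<forall>x\<in>V. \<exists>!k. k < n \<and> x \<in> cc_class V E n k)
                 \<and> hom V E (AC_verts n) (AC_arcs n) (cc_map V E n)))"
proof -
  have ii: "(\<forall>l. even l \<and> 4 \<le> l \<and> l \<le> n + 1 \<longrightarrow> \<not> (\<exists>v. semiwalk_with_pattern V E v (Q_pattern l)))
      \<longleftrightarrow> Q_semiwalk_free V E n"
    by (auto simp: Q_semiwalk_free_def semiwalk_with_Q_pattern_iff)
  have i_ii: "homomorphic V E (AC_verts n) (AC_arcs n) \<longleftrightarrow> Q_semiwalk_free V E n"
    using homomorphic_AC_iff_Q_semiwalk_free assms(1,2,4,5) by blast
  have ii_iii: "Q_semiwalk_free V E n \<longleftrightarrow> \<not> homomorphic (Q_verts (n + 1)) (Q_arcs (n + 1)) V E"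
    using Q_semiwalk_free_iff_no_Q_hom[OF assms(1)] assms(2) by simp
  have iv: "homomorphic V E (AC_verts n) (AC_arcs n) \<longleftrightarrow>
      (\<forall>x\<in>V. \<exists>!k. k < n \<and> x \<in> cc_class V E n k) \<and> hom V E (AC_verts n) (AC_arcs n) (cc_map V E n)"
    if "\<exists>x\<in>V. (\<exists>u. (u, x) \<in> E) \<and> (\<exists>w. (x, w) \<in> E)"
  proof -
    have "cc_A0 V E \<noteq> {}" using that unfolding cc_A0_def by blast
    then show ?thesis
      using i_ii cyclic_cover_hom assms(1,2,4,5) unfolding homomorphic_def by blast
  qed
  show ?thesis unfolding ii using i_ii ii_iii iv by blast
qed

end
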